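(* For a semigroup $S$ the following are equivalent: (i) $S$ is regular; (ii) $\underline{B}\cap\underline{A}=\underline{B}\circ\underline{A}$ for every IF left ideal $A=(\mu_A,\nu_A)$ and every IF right ideal $B=(\mu_B,\nu_B)$ of $S$.
   Context: A semigroup $S$ is regular if for every $a\in S$ there is $x\in S$ with $a=axa$. An intuitionistic fuzzy (IF) subset of $S$ is a pair $A=(\mu_A,\nu_A)$ of functions $S\to[0,1]$ with $\mu_A(x)+\nu_A(x)\le1$ for all $x$. $A$ is an IF right (resp. left) ideal of $S$ if $\mu_A(xy)\ge\mu_A(x)$ and $\nu_A(xy)\le\nu_A(x)$ (resp. $\mu_A(xy)\ge\mu_A(y)$ and $\nu_A(xy)\le\nu_A(y)$) for all $x,y\in S$. For $x\in S$ and $\alpha,\beta\in[0,1]$ with $\alpha+\beta\le1$, the IF point $x_{(\alpha,\beta)}$ is the IF subset of $S$ with value $(\alpha,\beta)$ at $x$ and $(0,1)$ elsewhere (so all points $x_{(0,1)}$ coincide). $\underline{S}$ is the set of all IF points of $S$; it is a semigroup under $x_{(\alpha,\beta)}\circ y_{(\gamma,\delta)}=(xy)_{(\min(\alpha,\gamma),\max(\beta,\delta))}$. For an IF subset $A$, $\underline{A}=\{x_{(\alpha,\beta)}\in\underline{S}:\mu_A(x)\ge\alpha,\ \nu_A(x)\le\beta\}$. For subsets $X,Y\subseteq\underline{S}$, $X\circ Y=\{p\circ q:p\in X,q\in Y\}$. *)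

theory Defs
  imports Complex_Main
begin

type_synonym 'a ifset = "('a \<Rightarrow> real) \<times> ('a \<Rightarrow> real)"

definition regular_semigroup :: "'a::semigroup_mult itself \<Rightarrow> bool" where
  "regular_semigroup _ \<longleftrightarrow> (\<forall>a::'a. \<exists>x. a = a * x * a)"

definition is_IFset :: "'a ifset \<Rightarrow> bool" where
  "is_IFset A \<longleftrightarrow> (\<forall>x. 0 \<le> fst A x \<and> fst A x \<le> 1 \<and> 0 \<le> snd A x \<and> snd A x \<le> 1
                        \<and> fst A x + snd A x \<le> 1)"

definition IF_right_ideal :: "'a::semigroup_mult ifset \<Rightarrow> bool" where
  "IF_right_ideal A \<longleftrightarrow> is_IFset A \<and>
     (\<forall>x y. fst A (x * y) \<ge> fst A x \<and> snd A (x * y) \<le> snd A x)"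

definition IF_left_ideal :: "'a::semigroup_mult ifset \<Rightarrow> bool" where
  "IF_left_ideal A \<longleftrightarrow> is_IFset A \<and>
     (\<forall>x y. fst A (x * y) \<ge> fst A y \<and> snd A (x * y) \<le> snd A y)"

definition IF_params :: "real \<Rightarrow> real \<Rightarrow> bool" where
  "IF_params \<alpha> \<beta> \<longleftrightarrow> 0 \<le> \<alpha> \<and> \<alpha> \<le> 1 \<and> 0 \<le> \<beta> \<and> \<beta> \<le> 1 \<and> \<alpha> + \<beta> \<le> 1"

definition IF_point :: "'a \<Rightarrow> real \<Rightarrow> real \<Rightarrow> 'a ifset" where
  "IF_point x \<alpha> \<beta> = ((\<lambda>y. if y = x then \<alpha> else 0), (\<lambda>y. if y = x then \<beta> else 1))"

definition IF_points :: "'a ifset set" where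
  "IF_points = {IF_point x \<alpha> \<beta> | x \<alpha> \<beta>. IF_params \<alpha> \<beta>}"

definition IF_under :: "'a ifset \<Rightarrow> 'a ifset set" where
  "IF_under A = {IF_point x \<alpha> \<beta> | x \<alpha> \<beta>. IF_params \<alpha> \<beta> \<and> fst A x \<ge> \<alpha> \<and> snd A x \<le> \<beta>}"

definition IF_setprod :: "'a::semigroup_mult ifset set \<Rightarrow> 'a ifset set \<Rightarrow> 'a ifset set" where
  "IF_setprod X Y = {IF_point (x * y) (min \<alpha> \<gamma>) (max \<beta> \<delta>) | x y \<alpha> \<beta> \<gamma> \<delta>.
      IF_params \<alpha> \<beta> \<and> IF_params \<gamma> \<delta> \<and> IF_point x \<alpha> \<beta> \<in> X \<and> IF_point y \<gamma> \<delta> \<in> Y}"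

end

theory Submission
  imports Defs
begin

(* An IF point x_(a,b) other than the degenerate point x_(0,1) determines x, a
   and b, and for an IF subset B it lies in underline B exactly when mu_B(x) >= a and
   nu_B(x) <= b.  With this membership test:
   - in every semigroup, B o A is contained in B cap A for an IF right ideal B and an IF left
     ideal A, since (xy)_(min,max) inherits the bounds of x from B and those of y from A;
   - in a regular semigroup the reverse inclusion holds: for x = xsx, the point x_(a,b)
     factors as x_(a,b) o (sx)_(a,b), and (sx)_(a,b) lies in underline A;
   - conversely, taking for B and A the characteristic IF sets of the principal right and
     left ideals generated by a, the point a_(1,0) lies in B cap A, so it factors as
     x_(1,0) o y_(1,0) with x in aS^1 and y in S^1a, which makes a regular. *)

lemma IF_point_inject:
  assumes "IF_point x a b = IF_point x' a' b'" and "\<not> (a = 0 \<and> b = 1)"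
  shows "x = x' \<and> a = a' \<and> b = b'"
proof -
  have "fst (IF_point x a b) x = fst (IF_point x' a' b') x"
    and "snd (IF_point x a b) x = snd (IF_point x' a' b') x"
    using assms(1) by simp_all
  then have "a = (if x = x' then a' else 0)" "b = (if x = x' then b' else 1)"
    by (simp_all add: IF_point_def)
  with assms(2) show ?thesis by (auto split: if_splits)
qed

text \<open>Membership test for underline B.  The degenerate points x_(0,1) all coincide and belong to
  every underline B; the test still holds for them because the values of an IF set lie in [0,1].\<close>
lemma IF_point_in_under_iff:
  assumes "is_IFset B" and "IF_params a b"
  shows "IF_point x a b \<in> IF_under B \<longleftrightarrow> a \<le> fst B x \<and> snd B x \<le> b"
proof
  assume mem: "IF_point x a b \<in> IF_under B"
  show "a \<le> fst B x \<and> snd B x \<le> b"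
  proof (cases "a = 0 \<and> b = 1")
    case True
    with assms(1) show ?thesis by (auto simp: is_IFset_def)
  next
    case False
    from mem obtain x' a' b' where eq: "IF_point x a b = IF_point x' a' b'"
      and "a' \<le> fst B x'" "snd B x' \<le> b'"
      by (auto simp: IF_under_def)
    with IF_point_inject[OF eq False] show ?thesis by simp
  qed
next
  assume "a \<le> fst B x \<and> snd B x \<le> b"
  with assms(2) show "IF_point x a b \<in> IF_under B"
    by (auto simp: IF_under_def)
qed

lemma IF_setprod_memE:
  assumes "p \<in> IF_setprod X Y"
  obtains x y a b c d where "p = IF_point (x * y) (min a c) (max b d)"
    and "IF_params a b" and "IF_params c d"
    and "IF_point x a b \<in> X" and "IF_point y c d \<in> Y"
  using assms unfolding IF_setprod_def by blast

lemma IF_setprod_memI: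
  assumes "IF_params a b" "IF_params c d" "IF_point x a b \<in> X" "IF_point y c d \<in> Y"
  shows "IF_point (x * y) (min a c) (max b d) \<in> IF_setprod X Y"
  using assms unfolding IF_setprod_def by blast

lemma IF_params_min_max:
  "IF_params a b \<Longrightarrow> IF_params c d \<Longrightarrow> IF_params (min a c) (max b d)"
  by (auto simp: IF_params_def min_def max_def)

lemma IF_setprod_subset_inter:
  fixes A B :: "'a::semigroup_mult ifset"
  assumes A: "IF_left_ideal A" and B: "IF_right_ideal B"
  shows "IF_setprod (IF_under B) (IF_under A) \<subseteq> IF_under B \<inter> IF_under A"
proof
  have iA: "is_IFset A" and iB: "is_IFset B"
    using A B by (simp_all add: IF_left_ideal_def IF_right_ideal_def)
  fix p assume "p \<in> IF_setprod (IF_under B) (IF_under A)"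
  then obtain x y a b c d where p: "p = IF_point (x * y) (min a c) (max b d)"
    and ab: "IF_params a b" and cd: "IF_params c d"
    and x_mem: "IF_point x a b \<in> IF_under B" and y_mem: "IF_point y c d \<in> IF_under A"
    by (rule IF_setprod_memE)
  have xB: "a \<le> fst B x" "snd B x \<le> b"
    using x_mem IF_point_in_under_iff[OF iB ab] by simp_all
  have yA: "c \<le> fst A y" "snd A y \<le> d"
    using y_mem IF_point_in_under_iff[OF iA cd] by simp_all
  have "fst B x \<le> fst B (x * y)" "snd B (x * y) \<le> snd B x"
    using B by (simp_all add: IF_right_ideal_def)
  with xB min.cobounded1[of a c] max.cobounded1[of b d]
  have "min a c \<le> fst B (x * y) \<and> snd B (x * y) \<le> max b d" by linarith
  moreover have "fst A y \<le> fst A (x * y)" "snd A (x * y) \<le> snd A y"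
    using A by (simp_all add: IF_left_ideal_def)
  with yA min.cobounded2[of a c] max.cobounded2[of b d]
  have "min a c \<le> fst A (x * y) \<and> snd A (x * y) \<le> max b d" by linarith
  ultimately show "p \<in> IF_under B \<inter> IF_under A"
    unfolding p using IF_params_min_max[OF ab cd]
    by (simp add: IF_point_in_under_iff iA iB)
qed

text \<open>In a regular semigroup every point of underline B cap underline A factors through the
  product: x_(a,b) = x_(a,b) o (sx)_(a,b) where x = xsx.\<close>
lemma inter_subset_IF_setprod:
  fixes A B :: "'a::semigroup_mult ifset"
  assumes reg: "regular_semigroup TYPE('a)"
    and A: "IF_left_ideal A" and B: "IF_right_ideal B"
  shows "IF_under B \<inter> IF_under A \<subseteq> IF_setprod (IF_under B) (IF_under A)"
proof
  have iA: "is_IFset A" and iB: "is_IFset B"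
    using A B by (simp_all add: IF_left_ideal_def IF_right_ideal_def)
  fix p assume p_mem: "p \<in> IF_under B \<inter> IF_under A"
  then obtain x a b where p: "p = IF_point x a b" and ab: "IF_params a b"
    by (auto simp: IF_under_def)
  have xB: "IF_point x a b \<in> IF_under B" and xA: "a \<le> fst A x \<and> snd A x \<le> b"
    using p_mem p IF_point_in_under_iff[OF iA ab] by auto
  obtain s where xsx: "x = x * (s * x)"
    using reg unfolding regular_semigroup_def by (metis mult.assoc)
  have "fst A x \<le> fst A (s * x)" "snd A (s * x) \<le> snd A x"
    using A by (simp_all add: IF_left_ideal_def)
  with xA have sxA: "IF_point (s * x) a b \<in> IF_under A"
    by (simp add: IF_point_in_under_iff[OF iA ab])
  have "IF_point (x * (s * x)) (min a a) (max b b) \<in> IF_setprod (IF_under B) (IF_under A)"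
    using IF_setprod_memI[OF ab ab xB sxA] .
  with p xsx[symmetric] show "p \<in> IF_setprod (IF_under B) (IF_under A)" by simp
qed

definition IF_char :: "'a set \<Rightarrow> 'a ifset" where
  "IF_char R = ((\<lambda>x. if x \<in> R then 1 else 0), (\<lambda>x. if x \<in> R then 0 else 1))"

lemma IF_char_IFset: "is_IFset (IF_char R)"
  by (auto simp: is_IFset_def IF_char_def)

lemma IF_point_in_char_iff: "IF_point x 1 0 \<in> IF_under (IF_char R) \<longleftrightarrow> x \<in> R"
proof -
  have "IF_params 1 0" by (simp add: IF_params_def)
  then have "IF_point x 1 0 \<in> IF_under (IF_char R)
      \<longleftrightarrow> 1 \<le> fst (IF_char R) x \<and> snd (IF_char R) x \<le> 0"
    by (rule IF_point_in_under_iff[OF IF_char_IFset])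
  also have "\<dots> \<longleftrightarrow> x \<in> R"
    by (simp add: IF_char_def)
  finally show ?thesis .
qed

lemma IF_right_ideal_char:
  assumes "\<And>x y. x \<in> R \<Longrightarrow> x * y \<in> R"
  shows "IF_right_ideal (IF_char R)"
  using assms IF_char_IFset by (auto simp: IF_right_ideal_def IF_char_def)

lemma IF_left_ideal_char:
  assumes "\<And>x y. y \<in> L \<Longrightarrow> x * y \<in> L"
  shows "IF_left_ideal (IF_char L)"
  using assms IF_char_IFset by (auto simp: IF_left_ideal_def IF_char_def)

definition right_principal :: "'a::semigroup_mult \<Rightarrow> 'a set" where
  "right_principal a = insert a (range (\<lambda>s. a * s))"

definition left_principal :: "'a::semigroup_mult \<Rightarrow> 'a set" where
  "left_principal a = insert a (range (\<lambda>s. s * a))"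

lemma right_principal_closed: "x \<in> right_principal a \<Longrightarrow> x * y \<in> right_principal a"
  by (auto simp: right_principal_def mult.assoc)

lemma left_principal_closed: "y \<in> left_principal a \<Longrightarrow> x * y \<in> left_principal a"
  by (auto simp: left_principal_def mult.assoc[symmetric])

lemma regular_of_principal_factor:
  fixes a x y :: "'a::semigroup_mult"
  assumes x: "x \<in> right_principal a" and y: "y \<in> left_principal a" and a: "a = x * y"
  shows "\<exists>z. a = a * z * a"
proof -
  from x y consider "x = a" "y = a" | v where "x = a" "y = v * a"
    | u where "x = a * u" "y = a" | u v where "x = a * u" "y = v * a"
    by (auto simp: right_principal_def left_principal_def)
  then show ?thesis
  proof cases
    case 1
    from a have "a * a = a" unfolding 1 by (rule sym)
    then have "a = a * a * a" by (simp only:)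
    then show ?thesis by blast
  next
    case (2 v)
    from a have "a = a * v * a" unfolding 2 mult.assoc .
    then show ?thesis by blast
  next
    case (3 u)
    from a have "a = a * u * a" unfolding 3 mult.assoc .
    then show ?thesis by blast
  next
    case (4 u v)
    from a have "a = a * (u * v) * a" unfolding 4 mult.assoc .
    then show ?thesis by blast
  qed
qed

text \<open>If the product identity holds for the characteristic IF sets of the principal ideals of
  a, then a is regular: a_(1,0) lies in the intersection, hence factors.\<close>
lemma regular_element_of_IF_setprod:
  fixes a :: "'a::semigroup_mult"
  assumes prod: "IF_under (IF_char (right_principal a)) \<inter> IF_under (IF_char (left_principal a))
      = IF_setprod (IF_under (IF_char (right_principal a))) (IF_under (IF_char (left_principal a)))"
  shows "\<exists>z. a = a * z * a"
proof -
  have "IF_point a 1 0 \<in> IF_under (IF_char (right_principal a)) \<inter> IF_under (IF_char (left_principal a))"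
    by (simp add: IF_point_in_char_iff right_principal_def left_principal_def)
  then obtain x y \<alpha> \<beta> \<gamma> \<delta> where eq: "IF_point a 1 0 = IF_point (x * y) (min \<alpha> \<gamma>) (max \<beta> \<delta>)"
    and \<alpha>\<beta>: "IF_params \<alpha> \<beta>" and \<gamma>\<delta>: "IF_params \<gamma> \<delta>"
    and xR: "IF_point x \<alpha> \<beta> \<in> IF_under (IF_char (right_principal a))"
    and yL: "IF_point y \<gamma> \<delta> \<in> IF_under (IF_char (left_principal a))"
    unfolding prod by (rule IF_setprod_memE)
  from IF_point_inject[OF eq] have a: "a = x * y" and "min \<alpha> \<gamma> = 1" by auto
  with \<alpha>\<beta> \<gamma>\<delta> have "\<alpha> = 1" "\<beta> = 0" "\<gamma> = 1" "\<delta> = 0"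
    by (auto simp: IF_params_def min_def split: if_splits)
  with xR yL have "x \<in> right_principal a" and "y \<in> left_principal a"
    by (simp_all add: IF_point_in_char_iff)
  from this a show ?thesis by (rule regular_of_principal_factor)
qed

theorem theorem3p15:
  shows "regular_semigroup TYPE('a::semigroup_mult) \<longleftrightarrow>
    (\<forall>A B :: 'a ifset. IF_left_ideal A \<and> IF_right_ideal B \<longrightarrow>
        IF_under B \<inter> IF_under A = IF_setprod (IF_under B) (IF_under A))"
proof
  assume reg: "regular_semigroup TYPE('a)"
  show "\<forall>A B :: 'a ifset. IF_left_ideal A \<and> IF_right_ideal B \<longrightarrow>
      IF_under B \<inter> IF_under A = IF_setprod (IF_under B) (IF_under A)"
  proof (intro allI impI)
    fix A B :: "'a ifset"
    assume "IF_left_ideal A \<and> IF_right_ideal B"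
    then have A: "IF_left_ideal A" and B: "IF_right_ideal B" by simp_all
    show "IF_under B \<inter> IF_under A = IF_setprod (IF_under B) (IF_under A)"
      using inter_subset_IF_setprod[OF reg A B] IF_setprod_subset_inter[OF A B]
      by (rule subset_antisym)
  qed
next
  assume prod: "\<forall>A B :: 'a ifset. IF_left_ideal A \<and> IF_right_ideal B \<longrightarrow>
      IF_under B \<inter> IF_under A = IF_setprod (IF_under B) (IF_under A)"
  have "\<exists>z. a = a * z * a" for a :: 'a
  proof (rule regular_element_of_IF_setprod)
    have "IF_left_ideal (IF_char (left_principal a))"
      by (rule IF_left_ideal_char[OF left_principal_closed])
    moreover have "IF_right_ideal (IF_char (right_principal a))"
      by (rule IF_right_ideal_char[OF right_principal_closed])
    ultimately show "IF_under (IF_char (right_principal a)) \<inter> IF_under (IF_char (left_principal a))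
        = IF_setprod (IF_under (IF_char (right_principal a))) (IF_under (IF_char (left_principal a)))"
      using prod by blast
  qed
  then show "regular_semigroup TYPE('a)"
    by (simp add: regular_semigroup_def)
qed

end
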